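(* Let $q>1$, $p=\frac{q}{q-1}$, and assume Hypothesis (H$_q$). Then for every $\theta>0$, $$\Big|\frac16\Big[f(ma)+4f\Big(\frac{m(a+b)}{2}\Big)+f(mb)\Big]-\frac{\Gamma(\theta+1)2^{\theta-1}}{m^\theta(b-a)^\theta}\Big[J^\theta_{(\frac{m(a+b)}{2})^-}f(ma)+J^\theta_{(\frac{m(a+b)}{2})^+}f(mb)\Big]\Big|$$ $$\le\frac{m(b-a)}{4}A_4\big(\theta,\tfrac13,p\big)^{\frac1p}\Big\{\Big(\frac{|f'(\frac{m(a+b)}2)|^q+\alpha m|f'(a)|^q}{\alpha+1}\Big)^{\frac1q}+\Big(\frac{|f'(\frac{m(a+b)}2)|^q+\alpha m|f'(b)|^q}{\alpha+1}\Big)^{\frac1q}\Big\}.$$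
   Context: Let $\Gamma$ denote Euler's Gamma function. For $\theta>0$, $c=\frac{m(a+b)}{2}$: $J^\theta_{c^-}f(ma)=\frac{1}{\Gamma(\theta)}\int_{ma}^{c}(s-ma)^{\theta-1}f(s)\,ds$ and $J^\theta_{c^+}f(mb)=\frac{1}{\Gamma(\theta)}\int_{c}^{mb}(mb-s)^{\theta-1}f(s)\,ds$. $(\alpha,m)$-convexity: for $(\alpha,m)\in[0,1]\times(0,1]$ and an interval $K\subseteq[0,\infty)$, a function $g:K\to\mathbb{R}$ is $(\alpha,m)$-convex on $K$ if $g(tX+m(1-t)Y)\le t^\alpha g(X)+m(1-t^\alpha)g(Y)$ for all $X,Y\in K$ and $t\in[0,1]$ with $tX+m(1-t)Y\in K$ (convention $0^0=1$). Hypothesis (H$_q$): $I\subseteq[0,\infty)$ is an interval, $f:I\to\mathbb{R}$ is differentiable on the interior $I^\circ$, $m\in(0,1]$, $\alpha\in[0,1]$, $a<b$ with $ma,b\in I^\circ$, $f'$ is Lebesgue integrable on $[ma,mb]$, and $|f'|^q$ is $(\alpha,m)$-convex on $[ma,b]$. $\beta(u,v)=\int_0^1t^{u-1}(1-t)^{v-1}dt$ ($u,v>0$) is the Beta function and ${}_2F_1(a',b';c';z)=\frac{1}{\beta(b',c'-b')}\int_0^1t^{b'-1}(1-t)^{c'-b'-1}(1-zt)^{-a'}dt$ ($c'>b'>0$, $|z|<1$) the hypergeometric function. For $\theta>0$, $p>1$ and $0<\lambda<1$: $A_4(\theta,\lambda,p)=\frac{\lambda^{\frac{\theta p+1}{\theta}}}{\theta}\Big\{\beta\big(\tfrac1\theta,p+1\big)+\frac{(1-\lambda)^{p+1}}{p+1}\,{}_2F_1\big(\tfrac1\theta+p+1,\,p+1;\,p+2;\,1-\lambda\big)\Big\}$.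 *)

theory Defs
  imports "HOL-Analysis.Analysis"
begin

text \<open>Power t^alpha with the convention 0^0 = 1 (Isabelle's powr has 0 powr 0 = 0).\<close>
definition pow0 :: "real \<Rightarrow> real \<Rightarrow> real" where
  "pow0 t \<alpha> = (if t = 0 then (if \<alpha> = 0 then 1 else 0) else t powr \<alpha>)"

definition alpha_m_convex :: "real \<Rightarrow> real \<Rightarrow> real set \<Rightarrow> (real \<Rightarrow> real) \<Rightarrow> bool" where
  "alpha_m_convex \<alpha> m K g \<longleftrightarrow>
     (\<forall>X\<in>K. \<forall>Y\<in>K. \<forall>t\<in>{0..1}. t * X + m * (1 - t) * Y \<in> K \<longrightarrow>
        g (t * X + m * (1 - t) * Y) \<le> pow0 t \<alpha> * g X + m * (1 - pow0 t \<alpha>) * g Y)"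

definition RL_left :: "real \<Rightarrow> real \<Rightarrow> (real \<Rightarrow> real) \<Rightarrow> real \<Rightarrow> real" where
  "RL_left \<theta> c f x = (LBINT s:{x..c}. (s - x) powr (\<theta> - 1) * f s) / Gamma \<theta>"

definition RL_right :: "real \<Rightarrow> real \<Rightarrow> (real \<Rightarrow> real) \<Rightarrow> real \<Rightarrow> real" where
  "RL_right \<theta> c f y = (LBINT s:{c..y}. (y - s) powr (\<theta> - 1) * f s) / Gamma \<theta>"

text \<open>Gauss hypergeometric function via Euler's integral representation.\<close>
definition hyp2F1 :: "real \<Rightarrow> real \<Rightarrow> real \<Rightarrow> real \<Rightarrow> real" where
  "hyp2F1 a' b' c' z =
     (LBINT t:{0..1}. t powr (b' - 1) * (1 - t) powr (c' - b' - 1) * (1 - z * t) powr (- a'))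
       / Beta b' (c' - b')"

definition A4 :: "real \<Rightarrow> real \<Rightarrow> real \<Rightarrow> real" where
  "A4 \<theta> lam p = lam powr ((\<theta> * p + 1) / \<theta>) / \<theta> *
     (Beta (1 / \<theta>) (p + 1) +
      (1 - lam) powr (p + 1) / (p + 1) * hyp2F1 (1 / \<theta> + p + 1) (p + 1) (p + 2) (1 - lam))"

end

theory Submission
  imports Defs "HOL-Real_Asymp.Real_Asymp"
begin

text \<open>
  Put A = m a, B = m b, c = (A + B)/2 and h = (B - A)/2. The substitutions s = A + h t and
  s = B - h t, followed by an integration by parts against the kernel t^\<theta> - 1/3, turn the
  left-hand side into (B - A)/4 times the difference of the integrals over [0,1] of
  (t^\<theta> - 1/3) f'(A + h t) and (t^\<theta> - 1/3) f'(B - h t). As A + h t = t c + m (1 - t) a and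
  B - h t = t c + m (1 - t) b, Hoelder's inequality bounds each of them by
  (\<integral>|t^\<theta> - 1/3|^p)^(1/p) = A4(\<theta>, 1/3, p)^(1/p) times the L^q-norm of f' along that path, and
  (\<alpha>,m)-convexity of |f'|^q bounds this norm through the integral of
  t^\<alpha> |f'(c)|^q + m (1 - t^\<alpha>) |f'(y)|^q, y \<in> {a, b}.
\<close>

lemma Holder_bound_of_Young_bounds:
  fixes X P Q p q :: real
  assumes pq: "p > 1" "q > 1" "1/p + 1/q = 1" and PQ: "P \<ge> 0" "Q \<ge> 0"
    and Young: "\<And>s. s > 0 \<Longrightarrow> X \<le> s powr p * P / p + s powr (-q) * Q / q"
  shows "X \<le> P powr (1/p) * Q powr (1/q)"
proof (cases "P = 0 \<or> Q = 0")
  case True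
  have "X \<le> 0"
  proof (cases "P = 0")
    case True
    have "((\<lambda>s. s powr p * P / p + s powr (-q) * Q / q) \<longlongrightarrow> 0) at_top"
      using True pq by real_asymp
    moreover have "\<forall>\<^sub>F s in at_top. X \<le> s powr p * P / p + s powr (-q) * Q / q"
      using eventually_gt_at_top[of 0] by eventually_elim (rule Young)
    ultimately show ?thesis by (rule tendsto_lowerbound) simp
  next
    case False
    with \<open>P = 0 \<or> Q = 0\<close> have "Q = 0" by simp
    have "((\<lambda>s. s powr p * P / p + s powr (-q) * Q / q) \<longlongrightarrow> 0) (at_right 0)"
      using \<open>Q = 0\<close> pq by real_asymp
    moreover have "\<forall>\<^sub>F s in at_right 0. X \<le> s powr p * P / p + s powr (-q) * Q / q"
      using eventually_at_right_less[of 0] by eventually_elim (rule Young)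
    ultimately show ?thesis by (rule tendsto_lowerbound) simp
  qed
  with True show ?thesis by auto
next
  case False
  with PQ have P: "P > 0" and Q: "Q > 0" by auto
  have pq_sum: "p + q = p * q" using pq by (simp add: field_simps)
  have p_inv: "1/p = 1 - 1/q" using pq by simp
  \<comment> \<open>the choice of \<open>s\<close> that makes both Young terms equal\<close>
  define s where "s = (Q / P) powr (1/(p+q))"
  have "s powr p = (Q/P) powr (1/q)" unfolding s_def using P Q pq pq_sum
    by (subst powr_powr) (simp add: field_simps)
  hence P_term: "s powr p * P = P powr (1/p) * Q powr (1/q)" using P Q
    by (simp add: powr_divide p_inv powr_diff field_simps)
  have "s powr (-q) = (Q/P) powr (-(1/p))" unfolding s_def using P Q pq pq_sum
    by (subst powr_powr) (simp add: field_simps)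
  hence Q_term: "s powr (-q) * Q = P powr (1/p) * Q powr (1/q)" using P Q
    by (simp add: powr_divide powr_minus p_inv powr_diff field_simps)
  have "X \<le> s powr p * P / p + s powr (-q) * Q / q" using P Q by (intro Young) (simp add: s_def)
  also have "\<dots> = P powr (1/p) * Q powr (1/q) * (1/p + 1/q)"
    using P_term Q_term by (simp add: field_simps)
  finally show ?thesis using pq by simp
qed

lemma Holder_inequality_integral:
  fixes u v :: "'a::euclidean_space \<Rightarrow> real"
  assumes pq: "p > 1" "q > 1" "1/p + 1/q = 1"
    and nonneg: "\<And>x. x \<in> S \<Longrightarrow> 0 \<le> u x" "\<And>x. x \<in> S \<Longrightarrow> 0 \<le> v x"
    and int: "(\<lambda>x. u x powr p) integrable_on S" "(\<lambda>x. v x powr q) integrable_on S"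
      "(\<lambda>x. u x * v x) integrable_on S"
  shows "integral S (\<lambda>x. u x * v x)
           \<le> integral S (\<lambda>x. u x powr p) powr (1/p) * integral S (\<lambda>x. v x powr q) powr (1/q)"
proof (rule Holder_bound_of_Young_bounds[OF pq])
  show "0 \<le> integral S (\<lambda>x. u x powr p)" "0 \<le> integral S (\<lambda>x. v x powr q)"
    using int by (auto intro: integral_nonneg)
  fix s :: real assume s: "s > 0"
  have Young: "u x * v x \<le> s powr p / p * u x powr p + s powr (-q) / q * v x powr q"
    if "x \<in> S" for x
  proof -
    have "u x * v x = (s * u x) * (v x / s)" using s by simp
    also have "\<dots> \<le> (s * u x) powr p / p + (v x / s) powr q / q"
      by (rule Youngs_inequality) (use pq nonneg[OF that] s in auto)
    also have "\<dots> = s powr p / p * u x powr p + s powr (-q) / q * v x powr q"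
      using s nonneg[OF that] by (simp add: powr_mult powr_divide powr_minus_divide field_simps)
    finally show ?thesis .
  qed
  have iu: "(\<lambda>x. s powr p / p * u x powr p) integrable_on S"
    using integrable_cmul[OF int(1), of "s powr p / p"] by simp
  have iv: "(\<lambda>x. s powr (-q) / q * v x powr q) integrable_on S"
    using integrable_cmul[OF int(2), of "s powr (-q) / q"] by simp
  have "integral S (\<lambda>x. u x * v x)
          \<le> integral S (\<lambda>x. s powr p / p * u x powr p + s powr (-q) / q * v x powr q)"
    by (rule integral_le[OF int(3) integrable_add[OF iu iv] Young])
  also have "\<dots> = s powr p * integral S (\<lambda>x. u x powr p) / p + s powr (-q) * integral S (\<lambda>x. v x powr q) / q"
    unfolding integral_add[OF iu iv] by simp
  finally show "integral S (\<lambda>x. u x * v x)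
      \<le> s powr p * integral S (\<lambda>x. u x powr p) / p + s powr (-q) * integral S (\<lambda>x. v x powr q) / q" .
qed

lemma Beta_one_right:
  assumes "a > 0" shows "Beta a 1 = 1 / (a::real)"
proof -
  have "Gamma (a + 1) = a * Gamma a"
    using assms by (intro Gamma_plus1) (auto elim!: nonpos_Ints_cases)
  with Gamma_real_pos[OF assms] show ?thesis by (simp add: Beta_def)
qed

lemma continuous_on_abs_powr_diff:
  assumes "\<theta> > 0" "p > 0"
  shows "continuous_on {0..} (\<lambda>t::real. \<bar>t powr \<theta> - l\<bar> powr p)"
  using assms by (intro continuous_on_powr' continuous_intros) auto

lemma integral_abs_powr_diff_lower:
  fixes l \<theta> p :: real
  assumes \<theta>: "\<theta> > 0" and p: "p > 0" and l: "l > 0"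
  shows "integral {0..l powr (1/\<theta>)} (\<lambda>t. \<bar>t powr \<theta> - l\<bar> powr p)
           = l powr (1/\<theta> + p) / \<theta> * Beta (1/\<theta>) (p + 1)"
proof -
  let ?F = "\<lambda>t. \<bar>t powr \<theta> - l\<bar> powr p"
  define \<mu> where "\<mu> = l powr (1/\<theta>)"
  have \<mu>: "\<mu> > 0" "\<mu> powr \<theta> = l" unfolding \<mu>_def using l \<theta> by (simp_all add: powr_powr)
  define g where "g s = \<mu> * s powr (1/\<theta>)" for s :: real
  define g' where "g' s = \<mu> / \<theta> * s powr (1/\<theta> - 1)" for s :: real
  have "((\<lambda>s. g' s *\<^sub>R ?F (g s)) has_integral (integral {g 0..g 1} ?F - integral {g 1..g 0} ?F)) {0..1}"
  proof (rule has_integral_substitution_general[of "{0}" 0 1 g 0 \<mu>])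
    show "g ` {0..1} \<subseteq> {0..\<mu>}"
      using \<mu> \<theta> by (auto simp: g_def intro!: mult_left_le powr_le1)
    show "continuous_on {0..\<mu>} ?F"
      by (rule continuous_on_subset[OF continuous_on_abs_powr_diff[OF \<theta> p]]) auto
    show "continuous_on {0..1} g" unfolding g_def
      using \<theta> by (intro continuous_intros continuous_on_powr') auto
    show "(g has_field_derivative g' s) (at s within {0..1})" if "s \<in> {0..1} - {0}" for s
      using that unfolding g_def g'_def
      by (auto intro!: derivative_eq_intros simp: field_simps)
  qed auto
  hence "((\<lambda>s. g' s * ?F (g s)) has_integral integral {0..\<mu>} ?F) {0..1}"
    using \<mu> by (simp add: g_def)
  moreover have "g' s * ?F (g s) = l powr (1/\<theta> + p) / \<theta> * (s powr (1/\<theta> - 1) * (1 - s) powr (p + 1 - 1))"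
    if s: "s \<in> {0..1}" for s
  proof (cases "s = 0")
    case False
    with s have "g s powr \<theta> = l * s" "l * s \<le> l"
      using \<mu> \<theta> l by (simp_all add: g_def powr_mult powr_powr mult_left_le)
    hence "?F (g s) = (l * (1 - s)) powr p"
      by (simp add: algebra_simps)
    hence "?F (g s) = l powr p * (1 - s) powr p"
      using s l by (simp add: powr_mult)
    thus ?thesis using l by (simp add: g'_def \<mu>_def powr_add)
  qed (simp add: g'_def)
  ultimately have "((\<lambda>s. l powr (1/\<theta> + p) / \<theta> * (s powr (1/\<theta> - 1) * (1 - s) powr (p + 1 - 1)))
      has_integral integral {0..\<mu>} ?F) {0..1}"
    by (rule has_integral_eq[rotated]) simp
  moreover have "((\<lambda>s. l powr (1/\<theta> + p) / \<theta> * (s powr (1/\<theta> - 1) * (1 - s) powr (p + 1 - 1)))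
      has_integral l powr (1/\<theta> + p) / \<theta> * Beta (1/\<theta>) (p + 1)) {0..1}"
    using \<theta> p by (intro has_integral_mult_right has_integral_Beta_real) auto
  ultimately show ?thesis unfolding \<mu>_def using has_integral_unique by blast
qed

text \<open>The substitution \<open>t = (l / (1 - (1 - l) s)) powr (1/\<theta>)\<close> turns this piece into Euler's integral of \<open>hyp2F1\<close>.\<close>

lemma integral_abs_powr_diff_upper:
  fixes l \<theta> p :: real
  assumes \<theta>: "\<theta> > 0" and p: "p > 0" and l: "0 < l" "l < 1"
  shows "integral {l powr (1/\<theta>)..1} (\<lambda>t. \<bar>t powr \<theta> - l\<bar> powr p)
           = l powr (1/\<theta> + p) / \<theta> * (1 - l) powr (p + 1)
             * integral {0..1} (\<lambda>s. s powr p * (1 - (1 - l) * s) powr (- (1/\<theta> + p + 1)))"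
proof -
  let ?F = "\<lambda>t. \<bar>t powr \<theta> - l\<bar> powr p"
  define D where "D s = 1 - (1 - l) * s" for s
  have D: "l \<le> D s" "D s \<le> 1" if "s \<in> {0..1}" for s
  proof -
    have "(1 - l) * s \<le> 1 - l" "0 \<le> (1 - l) * s" using that l by (auto intro: mult_left_le)
    thus "l \<le> D s" "D s \<le> 1" using that l unfolding D_def by linarith+
  qed
  define g where "g s = l powr (1/\<theta>) * D s powr (- (1/\<theta>))" for s
  define g' where "g' s = l powr (1/\<theta>) * (1 - l) / \<theta> * D s powr (- (1/\<theta>) - 1)" for s
  have g_eq: "g s = (l / D s) powr (1/\<theta>)" if "s \<in> {0..1}" for s
    using D[OF that] l by (simp add: g_def powr_divide powr_minus_divide)
  have g_powr: "g s powr \<theta> = l / D s" if "s \<in> {0..1}" for s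
    using D[OF that] l \<theta> by (simp add: g_eq[OF that] powr_powr)
  have g01: "g 0 = l powr (1/\<theta>)" "g 1 = 1"
    using g_eq[of 0] g_eq[of 1] l by (simp_all add: D_def)
  have g_range: "g s \<in> {l powr (1/\<theta>)..1}" if "s \<in> {0..1}" for s
    using D[OF that] l \<theta> unfolding g_eq[OF that]
    by (auto simp: field_simps intro!: powr_mono2 powr_le1)
  have "((\<lambda>s. g' s *\<^sub>R ?F (g s)) has_integral integral {g 0..g 1} ?F) {0..1}"
  proof (rule has_integral_substitution[of 0 1 g "l powr (1/\<theta>)" 1])
    show "g 0 \<le> g 1" using g_range[of 0] by (simp add: g01)
    show "continuous_on {l powr (1/\<theta>)..1} ?F"
      by (rule continuous_on_subset[OF continuous_on_abs_powr_diff[OF \<theta> p]]) auto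
    show "(g has_field_derivative g' s) (at s within {0..1})" if "s \<in> {0..1}" for s
    proof -
      have "(D has_real_derivative - (1 - l)) (at s)"
        unfolding D_def by (auto intro!: derivative_eq_intros)
      hence "((\<lambda>s. D s powr (- (1/\<theta>))) has_real_derivative
               - (1/\<theta>) * D s powr (- (1/\<theta>) - of_nat 1) * - (1 - l)) (at s)"
        by (rule DERIV_fun_powr) (use D[OF that] l in auto)
      hence "(g has_real_derivative l powr (1/\<theta>) * (- (1/\<theta>) * D s powr (- (1/\<theta>) - of_nat 1) * - (1 - l))) (at s)"
        unfolding g_def by (rule DERIV_cmult)
      moreover have "l powr (1/\<theta>) * (- (1/\<theta>) * D s powr (- (1/\<theta>) - of_nat 1) * - (1 - l)) = g' s"
        by (simp add: g'_def divide_simps algebra_simps)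
      ultimately show ?thesis by (metis has_field_derivative_at_within)
    qed
  qed (use g_range in auto)
  hence "((\<lambda>s. g' s * ?F (g s)) has_integral integral {l powr (1/\<theta>)..1} ?F) {0..1}"
    by (simp add: g01)
  moreover have "g' s * ?F (g s) = l powr (1/\<theta> + p) / \<theta> * (1 - l) powr (p + 1)
                                   * (s powr p * D s powr (- (1/\<theta> + p + 1)))"
    if s: "s \<in> {0..1}" for s
  proof -
    have Ds: "D s > 0" using D[OF s] l by linarith
    have "g s powr \<theta> - l = l * (1 - l) * s / D s"
      using g_powr[OF s] Ds by (simp add: D_def field_simps)
    hence F: "?F (g s) = l powr p * (1 - l) powr p * s powr p / D s powr p"
      using s l Ds by (simp add: powr_mult powr_divide)
    have "- (1/\<theta> + p + 1) = (- (1/\<theta>) - 1) - p" by simp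
    hence "D s powr (- (1/\<theta> + p + 1)) = D s powr (- (1/\<theta>) - 1) / D s powr p"
      by (simp only: powr_diff)
    moreover have "l powr (1/\<theta> + p) = l powr (1/\<theta>) * l powr p"
      "(1 - l) powr (p + 1) = (1 - l) powr p * (1 - l)"
      using l by (simp_all add: powr_add)
    ultimately show ?thesis unfolding g'_def F by simp
  qed
  ultimately have "((\<lambda>s. l powr (1/\<theta> + p) / \<theta> * (1 - l) powr (p + 1)
                        * (s powr p * D s powr (- (1/\<theta> + p + 1))))
                     has_integral integral {l powr (1/\<theta>)..1} ?F) {0..1}"
    by (rule has_integral_eq[rotated]) simp
  hence "integral {0..1} (\<lambda>s. l powr (1/\<theta> + p) / \<theta> * (1 - l) powr (p + 1)
                        * (s powr p * D s powr (- (1/\<theta> + p + 1))))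
           = integral {l powr (1/\<theta>)..1} ?F"
    by (rule integral_unique)
  thus ?thesis unfolding D_def integral_mult_right by (rule sym)
qed

lemma hyp2F1_eq_integral:
  fixes a b z :: real
  assumes b: "b > 0" and z: "z < 1"
  shows "hyp2F1 a b (b + 1) z = b * integral {0..1} (\<lambda>t. t powr (b - 1) * (1 - z * t) powr (- a))"
proof -
  let ?G = "\<lambda>t. t powr (b - 1) * (1 - z * t) powr (- a)"
  \<comment> \<open>the integrand of \<open>hyp2F1_def\<close>; its factor \<open>(1 - t) powr 0\<close> vanishes at \<open>t = 1\<close>\<close>
  let ?L = "\<lambda>t. t powr (b - 1) * (1 - t) powr (b + 1 - b - 1) * (1 - z * t) powr (- a)"
  have pos: "1 - z * t > 0" if "t \<in> {0..1}" for t
  proof -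
    have "z * t \<le> max z 0"
      using that by (cases "z \<ge> 0") (auto simp: mult_left_le mult_nonpos_nonneg)
    thus ?thesis using z by linarith
  qed
  have "continuous_on {0..1} (\<lambda>t. (1 - z * t) powr (- a))"
    by (intro continuous_intros continuous_on_powr') (use pos in fastforce)+
  hence "bounded ((\<lambda>t. (1 - z * t) powr (- a)) ` {0..1})"
    by (intro compact_imp_bounded compact_continuous_image) auto
  then obtain C where C: "\<And>t. t \<in> {0..1} \<Longrightarrow> \<bar>(1 - z * t) powr (- a)\<bar> \<le> C"
    unfolding bounded_real by blast
  have "set_integrable lborel {0..1} ?L"
  proof (rule set_integrable_bound[OF set_integrable_mult_right[OF integrable_Beta[OF b zero_less_one]]])
    show "set_borel_measurable lborel {0..1} ?L"
      unfolding set_borel_measurable_def by measurable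
    have "\<bar>?L t\<bar> \<le> \<bar>C * (t powr (b - 1) * (1 - t) powr (1 - 1))\<bar>" if "t \<in> {0..1}" for t
    proof -
      have "(1 - z * t) powr (- a) \<le> \<bar>C\<bar>" using C[OF that] by linarith
      hence "t powr (b - 1) * (1 - z * t) powr (- a) \<le> t powr (b - 1) * \<bar>C\<bar>"
        by (rule mult_left_mono) simp
      thus ?thesis by (simp add: abs_mult mult.commute)
    qed
    thus "AE t in lborel. t \<in> {0..1} \<longrightarrow> norm (?L t) \<le> norm (C * (t powr (b - 1) * (1 - t) powr (1 - 1)))"
      by simp
  qed
  hence "(LBINT t:{0..1}. ?L t) = integral {0..1} ?L"
    by (rule set_borel_integral_eq_integral)
  also have "\<dots> = integral {0..1} ?G"
    by (rule integral_spike[of "{1}"]) auto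
  finally show ?thesis
    using b by (simp add: hyp2F1_def Beta_one_right)
qed

lemma has_integral_abs_powr_diff:
  fixes l \<theta> p :: real
  assumes \<theta>: "\<theta> > 0" and p: "p > 0" and l: "0 < l" "l < 1"
  shows "((\<lambda>t. \<bar>t powr \<theta> - l\<bar> powr p) has_integral A4 \<theta> l p) {0..1}"
proof -
  let ?F = "\<lambda>t. \<bar>t powr \<theta> - l\<bar> powr p"
  define \<mu> where "\<mu> = l powr (1/\<theta>)"
  have \<mu>: "0 \<le> \<mu>" "\<mu> \<le> 1" unfolding \<mu>_def using l \<theta> by (auto intro: powr_le1)
  have "?F integrable_on {0..1}"
    by (rule integrable_continuous_real, rule continuous_on_subset[OF continuous_on_abs_powr_diff[OF \<theta> p]]) auto
  hence "(?F has_integral integral {0..\<mu>} ?F + integral {\<mu>..1} ?F) {0..1}"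
    using integrable_integral Henstock_Kurzweil_Integration.integral_combine[OF \<mu>] by metis
  moreover have "integral {0..\<mu>} ?F + integral {\<mu>..1} ?F = A4 \<theta> l p"
  proof -
    define X where "X = l powr (1/\<theta> + p) / \<theta>"
    define J where "J = integral {0..1} (\<lambda>s. s powr p * (1 - (1 - l) * s) powr (- (1/\<theta> + p + 1)))"
    have "hyp2F1 (1/\<theta> + p + 1) (p + 1) (p + 1 + 1) (1 - l)
        = (p + 1) * integral {0..1} (\<lambda>s. s powr (p + 1 - 1) * (1 - (1 - l) * s) powr (- (1/\<theta> + p + 1)))"
      using p l by (intro hyp2F1_eq_integral) auto
    moreover have "p + 1 + 1 = p + 2" "p + 1 - 1 = p" by simp_all
    ultimately have "hyp2F1 (1/\<theta> + p + 1) (p + 1) (p + 2) (1 - l) = (p + 1) * J"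
      unfolding J_def by (simp only:)
    moreover have "(\<theta> * p + 1) / \<theta> = 1/\<theta> + p" using \<theta> by (simp add: field_simps)
    ultimately have "A4 \<theta> l p = X * (Beta (1/\<theta>) (p + 1) + (1 - l) powr (p + 1) / (p + 1) * ((p + 1) * J))"
      unfolding A4_def X_def by simp
    also have "\<dots> = X * Beta (1/\<theta>) (p + 1) + X * (1 - l) powr (p + 1) * J"
      using p by (simp add: field_simps)
    finally show ?thesis
      unfolding \<mu>_def integral_abs_powr_diff_lower[OF \<theta> p l(1)] integral_abs_powr_diff_upper[OF \<theta> p l]
        X_def J_def by simp
  qed
  ultimately show ?thesis by simp
qed

lemma affine_mem_closed_segment_iff:
  fixes a h t :: real
  assumes "h \<noteq> 0"
  shows "a + h * t \<in> closed_segment a (a + h) \<longleftrightarrow> t \<in> {0..1}"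
  using assms unfolding closed_segment_eq_real_ivl
  by (cases "h > 0") (auto simp: mult_le_cancel_left1 mult_le_cancel_left2 mult_le_0_iff zero_le_mult_iff)

lemma set_integral_affine_unit_interval:
  fixes F :: "real \<Rightarrow> real" and a h :: real
  assumes "h \<noteq> 0"
  shows "(LBINT s:closed_segment a (a + h). F s) = \<bar>h\<bar> * (LBINT t:{0..1}. F (a + h * t))"
proof -
  have "(LBINT s:closed_segment a (a + h). F s)
          = \<bar>h\<bar> * (LBINT t. indicator (closed_segment a (a + h)) (a + h * t) * F (a + h * t))"
    unfolding set_lebesgue_integral_def
    using lborel_integral_real_affine[OF assms, of "\<lambda>s. indicator (closed_segment a (a + h)) s * F s" a]
    by simp
  also have "(\<lambda>t. indicator (closed_segment a (a + h)) (a + h * t) * F (a + h * t))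
               = (\<lambda>t. indicator {0..1} t * F (a + h * t))"
    using affine_mem_closed_segment_iff[OF assms] by (auto simp: indicator_def)
  finally show ?thesis by (simp add: set_lebesgue_integral_def)
qed

lemma set_integrable_affine_unit_interval:
  fixes F :: "real \<Rightarrow> real" and a h :: real
  assumes "h \<noteq> 0" and "set_integrable lborel (closed_segment a (a + h)) F"
  shows "set_integrable lborel {0..1} (\<lambda>t. F (a + h * t))"
proof -
  have "integrable lborel (\<lambda>t. indicator (closed_segment a (a + h)) (a + h * t) * F (a + h * t))"
    using lborel_integrable_real_affine[of _ h a] assms unfolding set_integrable_def by simp
  also have "(\<lambda>t. indicator (closed_segment a (a + h)) (a + h * t) * F (a + h * t))
               = (\<lambda>t. indicator {0..1} t * F (a + h * t))"
    using affine_mem_closed_segment_iff[OF assms(1)] by (auto simp: indicator_def)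
  finally show ?thesis by (simp add: set_integrable_def)
qed

lemma set_integrable_lborel_imp_absolutely_integrable:
  fixes f :: "'a::euclidean_space \<Rightarrow> real"
  assumes "set_integrable lborel S f"
  shows "f absolutely_integrable_on S"
  using assms integrable_completion[OF borel_measurable_integrable]
  unfolding set_integrable_def by blast

lemma set_integrable_powr_mult_continuous:
  fixes \<phi> :: "real \<Rightarrow> real"
  assumes \<theta>: "\<theta> > 0" and \<phi>: "continuous_on {0..1} \<phi>"
  shows "set_integrable lborel {0..1} (\<lambda>t. t powr (\<theta> - 1) * \<phi> t)"
proof -
  obtain C where C: "\<And>t. t \<in> {0..1} \<Longrightarrow> \<bar>\<phi> t\<bar> \<le> C"
    using compact_imp_bounded[OF compact_continuous_image[OF \<phi> compact_Icc]]
    unfolding bounded_real by blast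
  have "set_integrable lborel {0..1} (\<lambda>t. t powr (\<theta> - 1))"
  proof -
    have "(\<lambda>t. t powr (\<theta> - 1)) absolutely_integrable_on {0..1}"
      using \<theta> by (intro nonnegative_absolutely_integrable_1 integrable_on_powr_from_0) auto
    moreover have "(\<lambda>t. indicator {0..1} t *\<^sub>R t powr (\<theta> - 1)) \<in> borel_measurable lborel"
      by measurable
    ultimately show ?thesis
      unfolding set_integrable_def using integrable_completion by blast
  qed
  thus ?thesis
  proof (rule set_integrable_bound[OF set_integrable_mult_left])
    show "set_borel_measurable lborel {0..1} (\<lambda>t. t powr (\<theta> - 1) * \<phi> t)"
    proof -
      have "(\<lambda>t. indicator {0..1} t *\<^sub>R \<phi> t) \<in> borel_measurable borel"
        by (rule borel_measurable_continuous_on_indicator[OF _ \<phi>]) auto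
      hence "(\<lambda>t. t powr (\<theta> - 1) * (indicator {0..1} t *\<^sub>R \<phi> t)) \<in> borel_measurable lborel"
        by measurable
      thus ?thesis unfolding set_borel_measurable_def by (simp add: mult.left_commute)
    qed
    have "\<bar>t powr (\<theta> - 1) * \<phi> t\<bar> \<le> \<bar>t powr (\<theta> - 1) * C\<bar>" if "t \<in> {0..1}" for t
    proof -
      have "\<bar>\<phi> t\<bar> \<le> \<bar>C\<bar>" using C[OF that] by linarith
      thus ?thesis by (simp add: abs_mult mult_left_mono)
    qed
    thus "AE t in lborel. t \<in> {0..1} \<longrightarrow> norm (t powr (\<theta> - 1) * \<phi> t) \<le> norm (t powr (\<theta> - 1) * C)"
      by simp
  qed
qed

lemma set_integral_powr_kernel_affine:
  fixes f :: "real \<Rightarrow> real" and a h \<theta> :: real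
  assumes \<theta>: "\<theta> > 0" and h: "h \<noteq> 0" and f: "continuous_on (closed_segment a (a + h)) f"
  shows "(LBINT s:closed_segment a (a + h). \<bar>s - a\<bar> powr (\<theta> - 1) * f s)
           = \<bar>h\<bar> powr \<theta> * integral {0..1} (\<lambda>t. t powr (\<theta> - 1) * f (a + h * t))"
proof -
  have seg: "a + h * t \<in> closed_segment a (a + h)" if "t \<in> {0..1}" for t
    using affine_mem_closed_segment_iff[OF h] that by blast
  have cont: "continuous_on {0..1} (\<lambda>t. f (a + h * t))"
    by (rule continuous_on_compose2[OF f]) (auto intro!: continuous_intros seg)
  have "(LBINT s:closed_segment a (a + h). \<bar>s - a\<bar> powr (\<theta> - 1) * f s)
          = \<bar>h\<bar> * (LBINT t:{0..1}. \<bar>h * t\<bar> powr (\<theta> - 1) * f (a + h * t))"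
    using set_integral_affine_unit_interval[OF h] by simp
  also have "(LBINT t:{0..1}. \<bar>h * t\<bar> powr (\<theta> - 1) * f (a + h * t))
               = (LBINT t:{0..1}. \<bar>h\<bar> powr (\<theta> - 1) * (t powr (\<theta> - 1) * f (a + h * t)))"
    by (rule set_lebesgue_integral_cong) (auto simp: abs_mult powr_mult)
  also have "\<dots> = \<bar>h\<bar> powr (\<theta> - 1) * integral {0..1} (\<lambda>t. t powr (\<theta> - 1) * f (a + h * t))"
    using set_borel_integral_eq_integral(2)[OF set_integrable_powr_mult_continuous[OF \<theta> cont]] by simp
  also have "\<bar>h\<bar> * (\<bar>h\<bar> powr (\<theta> - 1) * integral {0..1} (\<lambda>t. t powr (\<theta> - 1) * f (a + h * t)))
               = \<bar>h\<bar> powr \<theta> * integral {0..1} (\<lambda>t. t powr (\<theta> - 1) * f (a + h * t))"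
    using h by (simp add: powr_diff)
  finally show ?thesis .
qed

lemma absolutely_integrable_powr_kernel_mult:
  fixes G :: "real \<Rightarrow> real"
  assumes "\<theta> > 0" and "G absolutely_integrable_on {0..1}"
  shows "(\<lambda>t. (t powr \<theta> - l) * G t) absolutely_integrable_on {0..1}"
proof (rule absolutely_integrable_bounded_measurable_product_real[OF _ _ _ assms(2)])
  have K: "continuous_on {0..1} (\<lambda>t::real. t powr \<theta> - l)"
    using assms(1) by (intro continuous_intros continuous_on_powr') auto
  show "(\<lambda>t. t powr \<theta> - l) \<in> borel_measurable (lebesgue_on {0..1})"
    by (rule continuous_imp_measurable_on_sets_lebesgue[OF K]) auto
  show "bounded ((\<lambda>t. t powr \<theta> - l) ` {0..1})"
    by (rule compact_imp_bounded, rule compact_continuous_image[OF K]) auto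
qed auto

lemma integral_powr_kernel_by_parts:
  fixes \<phi> \<psi> :: "real \<Rightarrow> real" and \<theta> l :: real
  assumes \<theta>: "\<theta> > 0"
    and deriv: "\<And>t. t \<in> {0..1} \<Longrightarrow> (\<phi> has_real_derivative \<psi> t) (at t)"
    and \<psi>: "\<psi> absolutely_integrable_on {0..1}"
  shows "\<theta> * integral {0..1} (\<lambda>t. t powr (\<theta> - 1) * \<phi> t)
           + integral {0..1} (\<lambda>t. (t powr \<theta> - l) * \<psi> t) = (1 - l) * \<phi> 1 + l * \<phi> 0"
proof -
  let ?K = "\<lambda>t. t powr \<theta> - l"
  have K: "continuous_on {0..1} ?K"
    using \<theta> by (intro continuous_intros continuous_on_powr') auto
  have \<phi>: "continuous_on {0..1} \<phi>"
    by (intro continuous_at_imp_continuous_on ballI DERIV_isCont[OF deriv]) auto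
  have "(\<lambda>t. ?K t * \<psi> t) absolutely_integrable_on {0..1}"
    by (rule absolutely_integrable_powr_kernel_mult[OF \<theta> \<psi>])
  hence K\<psi>: "((\<lambda>t. ?K t * \<psi> t) has_integral integral {0..1} (\<lambda>t. ?K t * \<psi> t)) {0..1}"
    using set_lebesgue_integral_eq_integral(1) integrable_integral by blast
  have "((\<lambda>t. \<theta> * (t powr (\<theta> - 1) * \<phi> t) + ?K t * \<psi> t) has_integral ?K 1 * \<phi> 1 - ?K 0 * \<phi> 0) {0..1}"
  proof (rule fundamental_theorem_of_calculus_interior)
    show "continuous_on {0..1} (\<lambda>t. ?K t * \<phi> t)"
      by (intro continuous_on_mult K \<phi>)
    show "((\<lambda>t. ?K t * \<phi> t) has_vector_derivative \<theta> * (t powr (\<theta> - 1) * \<phi> t) + ?K t * \<psi> t) (at t)"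
      if "t \<in> {0<..<1}" for t
      using that deriv[of t] unfolding has_real_derivative_iff_has_vector_derivative[symmetric]
      by (auto intro!: derivative_eq_intros simp: algebra_simps)
  qed simp
  from has_integral_diff[OF this K\<psi>]
  have "((\<lambda>t. \<theta> * (t powr (\<theta> - 1) * \<phi> t)) has_integral
           (1 - l) * \<phi> 1 + l * \<phi> 0 - integral {0..1} (\<lambda>t. ?K t * \<psi> t)) {0..1}"
    by (simp add: algebra_simps)
  hence "integral {0..1} (\<lambda>t. \<theta> * (t powr (\<theta> - 1) * \<phi> t))
           = (1 - l) * \<phi> 1 + l * \<phi> 0 - integral {0..1} (\<lambda>t. ?K t * \<psi> t)"
    by (rule integral_unique)
  moreover have "integral {0..1} (\<lambda>t. \<theta> * (t powr (\<theta> - 1) * \<phi> t))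
                   = \<theta> * integral {0..1} (\<lambda>t. t powr (\<theta> - 1) * \<phi> t)"
    by (rule integral_mult_right)
  ultimately show ?thesis by linarith
qed

text \<open>Negative \<open>h\<close> is allowed, so that this identity serves the left- and the right-sided integral.\<close>

lemma fractional_integral_segment_identity:
  fixes f f' :: "real \<Rightarrow> real" and a h \<theta> l :: real
  assumes \<theta>: "\<theta> > 0" and h: "h \<noteq> 0"
    and deriv: "\<And>x. x \<in> closed_segment a (a + h) \<Longrightarrow> (f has_real_derivative f' x) (at x)"
    and f': "set_integrable lborel (closed_segment a (a + h)) f'"
  shows "\<theta> * (LBINT s:closed_segment a (a + h). \<bar>s - a\<bar> powr (\<theta> - 1) * f s)
           = \<bar>h\<bar> powr \<theta> * ((1 - l) * f (a + h) + l * f a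
                             - h * integral {0..1} (\<lambda>t. (t powr \<theta> - l) * f' (a + h * t)))"
proof -
  have seg: "a + h * t \<in> closed_segment a (a + h)" if "t \<in> {0..1}" for t
    using affine_mem_closed_segment_iff[OF h] that by blast
  have "continuous_on (closed_segment a (a + h)) f"
    by (intro continuous_at_imp_continuous_on ballI DERIV_isCont[OF deriv])
  note kernel = set_integral_powr_kernel_affine[OF \<theta> h this]
  have "(\<lambda>t. h * f' (a + h * t)) absolutely_integrable_on {0..1}"
    using set_integrable_lborel_imp_absolutely_integrable[OF set_integrable_affine_unit_interval[OF h f']]
    by (rule set_integrable_mult_right)
  moreover have "((\<lambda>t. f (a + h * t)) has_real_derivative h * f' (a + h * t)) (at t)" if "t \<in> {0..1}" for t
  proof -
    have "((\<lambda>t. a + h * t) has_real_derivative h) (at t)"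
      by (auto intro!: derivative_eq_intros)
    from DERIV_chain2[OF deriv[OF seg[OF that]] this] show ?thesis by (simp add: mult.commute)
  qed
  ultimately have "\<theta> * integral {0..1} (\<lambda>t. t powr (\<theta> - 1) * f (a + h * t))
      + integral {0..1} (\<lambda>t. (t powr \<theta> - l) * (h * f' (a + h * t))) = (1 - l) * f (a + h) + l * f a"
    using integral_powr_kernel_by_parts[OF \<theta>, of "\<lambda>t. f (a + h * t)"] by simp
  moreover have "integral {0..1} (\<lambda>t. (t powr \<theta> - l) * (h * f' (a + h * t)))
                   = h * integral {0..1} (\<lambda>t. (t powr \<theta> - l) * f' (a + h * t))"
    by (simp add: mult.left_commute)
  ultimately have "\<theta> * integral {0..1} (\<lambda>t. t powr (\<theta> - 1) * f (a + h * t))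
      = (1 - l) * f (a + h) + l * f a - h * integral {0..1} (\<lambda>t. (t powr \<theta> - l) * f' (a + h * t))"
    by linarith
  thus ?thesis unfolding kernel by (simp only: mult.left_commute[of \<theta>])
qed

lemma RL_left_eq_set_integral_segment:
  assumes "x \<le> c"
  shows "RL_left \<theta> c f x = (LBINT s:closed_segment x c. \<bar>s - x\<bar> powr (\<theta> - 1) * f s) / Gamma \<theta>"
proof -
  have "(LBINT s:{x..c}. (s - x) powr (\<theta> - 1) * f s) = (LBINT s:{x..c}. \<bar>s - x\<bar> powr (\<theta> - 1) * f s)"
    by (rule set_lebesgue_integral_cong) auto
  thus ?thesis unfolding RL_left_def closed_segment_eq_real_ivl1[OF assms] by simp
qed

lemma RL_right_eq_set_integral_segment:
  assumes "c \<le> y"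
  shows "RL_right \<theta> c f y = (LBINT s:closed_segment y c. \<bar>s - y\<bar> powr (\<theta> - 1) * f s) / Gamma \<theta>"
proof -
  have "(LBINT s:{c..y}. (y - s) powr (\<theta> - 1) * f s) = (LBINT s:{c..y}. \<bar>s - y\<bar> powr (\<theta> - 1) * f s)"
    by (rule set_lebesgue_integral_cong) auto
  thus ?thesis unfolding RL_right_def closed_segment_commute[of y c] closed_segment_eq_real_ivl1[OF assms] by simp
qed

lemma Simpson_fractional_identity:
  fixes f f' :: "real \<Rightarrow> real" and A B \<theta> :: real
  assumes AB: "A < B" and \<theta>: "\<theta> > 0"
    and deriv: "\<And>x. x \<in> {A..B} \<Longrightarrow> (f has_real_derivative f' x) (at x)"
    and f': "set_integrable lborel {A..B} f'"
  shows "(f A + 4 * f ((A + B) / 2) + f B) / 6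
           - Gamma (\<theta> + 1) * 2 powr (\<theta> - 1) / (B - A) powr \<theta>
             * (RL_left \<theta> ((A + B) / 2) f A + RL_right \<theta> ((A + B) / 2) f B)
         = (B - A) / 4 * (integral {0..1} (\<lambda>t. (t powr \<theta> - 1/3) * f' (A + (B - A) / 2 * t))
                          - integral {0..1} (\<lambda>t. (t powr \<theta> - 1/3) * f' (B - (B - A) / 2 * t)))"
proof -
  define h where "h = (B - A) / 2"
  define c where "c = (A + B) / 2"
  define J1 where "J1 = integral {0..1} (\<lambda>t. (t powr \<theta> - 1/3) * f' (A + h * t))"
  define J2 where "J2 = integral {0..1} (\<lambda>t. (t powr \<theta> - 1/3) * f' (B - h * t))"
  define L1 where "L1 = (LBINT s:closed_segment A c. \<bar>s - A\<bar> powr (\<theta> - 1) * f s)"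
  define L2 where "L2 = (LBINT s:closed_segment B c. \<bar>s - B\<bar> powr (\<theta> - 1) * f s)"
  have h: "h > 0" and c: "c = A + h" "c = B + - h"
    using AB by (simp_all add: h_def c_def field_simps)
  have seg: "closed_segment A (A + h) \<subseteq> {A..B}" "closed_segment B (B + - h) \<subseteq> {A..B}"
    using h c by (auto simp: closed_segment_eq_real_ivl)
  have int: "set_integrable lborel (closed_segment A (A + h)) f'" "set_integrable lborel (closed_segment B (B + - h)) f'"
    using seg by (auto intro: set_integrable_subset[OF f'])
  have "\<theta> * L1 = h powr \<theta> * (2/3 * f c + 1/3 * f A - h * J1)"
    using fractional_integral_segment_identity[of \<theta> h A f f' "1/3"] \<theta> h deriv seg(1) int(1)
    unfolding L1_def J1_def c(1) by fastforce
  moreover have "\<theta> * L2 = h powr \<theta> * (2/3 * f c + 1/3 * f B + h * J2)"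
    using fractional_integral_segment_identity[of \<theta> "- h" B f f' "1/3"] \<theta> h deriv seg(2) int(2)
    unfolding L2_def J2_def c(2) by fastforce
  ultimately have "\<theta> * L1 + \<theta> * L2 = h powr \<theta> * (4/3 * f c + 1/3 * f A + 1/3 * f B - h * J1 + h * J2)"
    by (simp add: algebra_simps)
  moreover have "Gamma (\<theta> + 1) * 2 powr (\<theta> - 1) / (B - A) powr \<theta> * (RL_left \<theta> c f A + RL_right \<theta> c f B)
                   = (\<theta> * L1 + \<theta> * L2) / (2 * h powr \<theta>)"
  proof -
    have "Gamma (\<theta> + 1) = \<theta> * Gamma \<theta>"
      using \<theta> by (intro Gamma_plus1) (auto elim!: nonpos_Ints_cases)
    moreover have "(B - A) powr \<theta> = 2 powr \<theta> * h powr \<theta>"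
    proof -
      have "B - A = 2 * h" by (simp add: h_def)
      thus ?thesis using h by (simp add: powr_mult)
    qed
    moreover have "RL_left \<theta> c f A = L1 / Gamma \<theta>" "RL_right \<theta> c f B = L2 / Gamma \<theta>"
      using h c unfolding L1_def L2_def
      by (auto intro!: RL_left_eq_set_integral_segment RL_right_eq_set_integral_segment)
    moreover have "Gamma \<theta> > 0" "h powr \<theta> > 0" using \<theta> h by auto
    ultimately show ?thesis by (simp add: powr_diff field_simps)
  qed
  moreover have "h powr \<theta> * S / (2 * h powr \<theta>) = S / 2" for S
    using h by simp
  ultimately have "Gamma (\<theta> + 1) * 2 powr (\<theta> - 1) / (B - A) powr \<theta> * (RL_left \<theta> c f A + RL_right \<theta> c f B)
      = (4/3 * f c + 1/3 * f A + 1/3 * f B - h * J1 + h * J2) / 2"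
    by simp
  moreover have "(f A + 4 * f c + f B) / 6 - (4/3 * f c + 1/3 * f A + 1/3 * f B - h * J1 + h * J2) / 2
                   = (B - A) / 4 * (J1 - J2)"
    by (simp add: h_def field_simps)
  ultimately show ?thesis
    unfolding c_def[symmetric] h_def[symmetric] J1_def[symmetric] J2_def[symmetric] by linarith
qed

lemma has_integral_pow0:
  assumes "\<alpha> \<ge> 0"
  shows "((\<lambda>t. pow0 t \<alpha>) has_integral 1 / (\<alpha> + 1)) {0..1}"
proof -
  have "((\<lambda>t. t powr \<alpha>) has_integral 1 / (\<alpha> + 1)) {0..1}"
    using has_integral_powr_from_0[of \<alpha> 1] assms by simp
  thus ?thesis
    by (rule has_integral_spike_finite[of "{0}", rotated 2]) (auto simp: pow0_def)
qed

lemma has_integral_pow0_combination: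
  assumes "\<alpha> \<ge> 0"
  shows "((\<lambda>t. pow0 t \<alpha> * U + m * (1 - pow0 t \<alpha>) * V) has_integral (U + \<alpha> * m * V) / (\<alpha> + 1)) {0..1}"
proof -
  note P = has_integral_pow0[OF assms]
  have "((\<lambda>t. 1 - pow0 t \<alpha>) has_integral 1 - 1 / (\<alpha> + 1)) {0..1}"
    using has_integral_diff[OF has_integral_const_real[of 1 0 1] P] by simp
  hence "((\<lambda>t. pow0 t \<alpha> * U + m * (1 - pow0 t \<alpha>) * V) has_integral
           1 / (\<alpha> + 1) * U + m * (1 - 1 / (\<alpha> + 1)) * V) {0..1}"
    by (intro has_integral_add has_integral_mult_left has_integral_mult_right P)
  moreover have "1 / (\<alpha> + 1) * U + m * (1 - 1 / (\<alpha> + 1)) * V = (U + \<alpha> * m * V) / (\<alpha> + 1)"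
  proof -
    have "1 - 1 / (\<alpha> + 1) = \<alpha> / (\<alpha> + 1)" using assms by (simp add: field_simps)
    thus ?thesis by (simp add: add_divide_distrib)
  qed
  ultimately show ?thesis by simp
qed

lemma abs_integral_powr_kernel_mult_le:
  fixes G :: "real \<Rightarrow> real"
  assumes pq: "p > 1" "q > 1" "1/p + 1/q = 1" and \<theta>: "\<theta> > 0" and l: "0 < l" "l < 1"
    and G: "G absolutely_integrable_on {0..1}" and Gq: "(\<lambda>t. \<bar>G t\<bar> powr q) integrable_on {0..1}"
  shows "\<bar>integral {0..1} (\<lambda>t. (t powr \<theta> - l) * G t)\<bar>
           \<le> A4 \<theta> l p powr (1/p) * integral {0..1} (\<lambda>t. \<bar>G t\<bar> powr q) powr (1/q)"
proof -
  let ?K = "\<lambda>t::real. t powr \<theta> - l"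
  have KA4: "((\<lambda>t. \<bar>?K t\<bar> powr p) has_integral A4 \<theta> l p) {0..1}"
    using has_integral_abs_powr_diff[OF \<theta> _ l] pq by simp
  have KG: "(\<lambda>t. ?K t * G t) integrable_on {0..1}" "(\<lambda>t. \<bar>?K t\<bar> * \<bar>G t\<bar>) integrable_on {0..1}"
    using absolutely_integrable_powr_kernel_mult[OF \<theta> G, of l]
    unfolding absolutely_integrable_on_def by (simp_all add: abs_mult)
  have "\<bar>integral {0..1} (\<lambda>t. ?K t * G t)\<bar> \<le> integral {0..1} (\<lambda>t. \<bar>?K t\<bar> * \<bar>G t\<bar>)"
    using integral_norm_bound_integral[OF KG] by (simp add: abs_mult)
  also have "\<dots> \<le> integral {0..1} (\<lambda>t. \<bar>?K t\<bar> powr p) powr (1/p) * integral {0..1} (\<lambda>t. \<bar>G t\<bar> powr q) powr (1/q)"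
    using KA4 Gq KG(2) by (intro Holder_inequality_integral[OF pq]) auto
  finally show ?thesis using integral_unique[OF KA4] by simp
qed

lemma abs_integral_powr_kernel_mult_le_alpha_m_convex:
  fixes g :: "real \<Rightarrow> real"
  assumes pq: "p > 1" "q > 1" "1/p + 1/q = 1" and \<theta>: "\<theta> > 0" and l: "0 < l" "l < 1"
    and \<alpha>: "\<alpha> \<ge> 0" and conv: "alpha_m_convex \<alpha> m K (\<lambda>x. \<bar>g x\<bar> powr q)"
    and XY: "X \<in> K" "Y \<in> K" "\<And>t. t \<in> {0..1} \<Longrightarrow> t * X + m * (1 - t) * Y \<in> K"
    and g: "(\<lambda>t. g (t * X + m * (1 - t) * Y)) absolutely_integrable_on {0..1}"
  shows "\<bar>integral {0..1} (\<lambda>t. (t powr \<theta> - l) * g (t * X + m * (1 - t) * Y))\<bar>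
           \<le> A4 \<theta> l p powr (1/p) * ((\<bar>g X\<bar> powr q + \<alpha> * m * \<bar>g Y\<bar> powr q) / (\<alpha> + 1)) powr (1/q)"
proof -
  let ?G = "\<lambda>t. g (t * X + m * (1 - t) * Y)"
  let ?B = "\<lambda>t. pow0 t \<alpha> * \<bar>g X\<bar> powr q + m * (1 - pow0 t \<alpha>) * \<bar>g Y\<bar> powr q"
  have bound: "\<bar>?G t\<bar> powr q \<le> ?B t" if "t \<in> {0..1}" for t
    using conv XY that unfolding alpha_m_convex_def by blast
  note B = has_integral_pow0_combination[OF \<alpha>, of "\<bar>g X\<bar> powr q" m "\<bar>g Y\<bar> powr q"]
  have "?G \<in> borel_measurable (lebesgue_on {0..1})"
    by (rule integrable_imp_measurable[OF set_lebesgue_integral_eq_integral(1)[OF g]])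
  hence "(\<lambda>t. \<bar>?G t\<bar> powr q) \<in> borel_measurable (lebesgue_on {0..1})"
    by measurable
  hence "(\<lambda>t. \<bar>?G t\<bar> powr q) absolutely_integrable_on {0..1}"
    by (rule measurable_bounded_by_integrable_imp_absolutely_integrable[OF _ _ has_integral_integrable[OF B]])
       (use bound in auto)
  hence Gq: "(\<lambda>t. \<bar>?G t\<bar> powr q) integrable_on {0..1}"
    by (rule set_lebesgue_integral_eq_integral(1))
  have "integral {0..1} (\<lambda>t. \<bar>?G t\<bar> powr q) \<le> (\<bar>g X\<bar> powr q + \<alpha> * m * \<bar>g Y\<bar> powr q) / (\<alpha> + 1)"
    using integral_le[OF Gq has_integral_integrable[OF B] bound] integral_unique[OF B] by simp
  hence "integral {0..1} (\<lambda>t. \<bar>?G t\<bar> powr q) powr (1/q)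
           \<le> ((\<bar>g X\<bar> powr q + \<alpha> * m * \<bar>g Y\<bar> powr q) / (\<alpha> + 1)) powr (1/q)"
    using pq Gq by (intro powr_mono2) (auto intro: integral_nonneg)
  with abs_integral_powr_kernel_mult_le[OF pq \<theta> l g Gq] show ?thesis
    by (meson mult_left_mono powr_ge_zero order_trans)
qed

lemma Simpson_fractional_identity_midpoint_paths:
  fixes f f' :: "real \<Rightarrow> real" and m a b \<theta> :: real
  assumes m: "m > 0" and ab: "a < b" and \<theta>: "\<theta> > 0"
    and deriv: "\<And>x. x \<in> {m * a..m * b} \<Longrightarrow> (f has_real_derivative f' x) (at x)"
    and f': "set_integrable lborel {m * a..m * b} f'"
  shows "(f (m * a) + 4 * f (m * (a + b) / 2) + f (m * b)) / 6
           - Gamma (\<theta> + 1) * 2 powr (\<theta> - 1) / (m powr \<theta> * (b - a) powr \<theta>)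
             * (RL_left \<theta> (m * (a + b) / 2) f (m * a) + RL_right \<theta> (m * (a + b) / 2) f (m * b))
         = m * (b - a) / 4
             * (integral {0..1} (\<lambda>t. (t powr \<theta> - 1/3) * f' (t * (m * (a + b) / 2) + m * (1 - t) * a))
                - integral {0..1} (\<lambda>t. (t powr \<theta> - 1/3) * f' (t * (m * (a + b) / 2) + m * (1 - t) * b)))"
proof -
  have eqs: "(m * a + m * b) / 2 = m * (a + b) / 2" "(m * b - m * a) / 4 = m * (b - a) / 4"
    "m * a + (m * b - m * a) / 2 * t = t * (m * (a + b) / 2) + m * (1 - t) * a"
    "m * b - (m * b - m * a) / 2 * t = t * (m * (a + b) / 2) + m * (1 - t) * b" for t
    by (simp_all add: field_simps)
  have "(m * b - m * a) powr \<theta> = m powr \<theta> * (b - a) powr \<theta>"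
    using m ab by (simp add: powr_mult flip: right_diff_distrib)
  moreover have "m * a < m * b" using m ab by simp
  from Simpson_fractional_identity[OF this \<theta> deriv f'] show ?thesis
    unfolding eqs calculation .
qed

lemma midpoint_path_affine:
  fixes m a b y :: real
  assumes m: "m > 0" and ab: "a < b" and y: "y \<in> {a, b}"
  obtains d where "d \<noteq> 0" "closed_segment (m * y) (m * y + d) \<subseteq> {m * a..m * b}"
    "\<And>t. t * (m * (a + b) / 2) + m * (1 - t) * y = m * y + d * t"
proof
  let ?d = "m * (a + b) / 2 - m * y"
  show "?d \<noteq> 0" using m ab y by (auto simp: field_simps)
  have "m * y \<in> {m * a..m * b}" "m * y + ?d \<in> {m * a..m * b}"
    using m ab y by (auto simp: field_simps)
  thus "closed_segment (m * y) (m * y + ?d) \<subseteq> {m * a..m * b}"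
    by (intro closed_segment_subset) auto
  show "t * (m * (a + b) / 2) + m * (1 - t) * y = m * y + ?d * t" for t
    by (simp add: algebra_simps)
qed

lemma midpoint_path_mem:
  fixes m a b y t :: real
  assumes "m > 0" "a < b" "y \<in> {a, b}" "t \<in> {0..1}"
  shows "t * (m * (a + b) / 2) + m * (1 - t) * y \<in> {m * a..m * b}"
proof -
  obtain d where "d \<noteq> 0" "closed_segment (m * y) (m * y + d) \<subseteq> {m * a..m * b}"
    "\<And>t. t * (m * (a + b) / 2) + m * (1 - t) * y = m * y + d * t"
    using midpoint_path_affine[OF assms(1-3)] by blast
  thus ?thesis using affine_mem_closed_segment_iff[of d "m * y" t] assms(4) by auto
qed

lemma absolutely_integrable_midpoint_path:
  fixes g :: "real \<Rightarrow> real" and m a b y :: real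
  assumes "m > 0" "a < b" "y \<in> {a, b}" and g: "set_integrable lborel {m * a..m * b} g"
  shows "(\<lambda>t. g (t * (m * (a + b) / 2) + m * (1 - t) * y)) absolutely_integrable_on {0..1}"
proof -
  obtain d where d: "d \<noteq> 0" "closed_segment (m * y) (m * y + d) \<subseteq> {m * a..m * b}"
    and path: "\<And>t. t * (m * (a + b) / 2) + m * (1 - t) * y = m * y + d * t"
    using midpoint_path_affine[OF assms(1-3)] by blast
  have "set_integrable lborel {0..1} (\<lambda>t. g (m * y + d * t))"
    using d by (intro set_integrable_affine_unit_interval set_integrable_subset[OF g]) auto
  thus ?thesis unfolding path by (rule set_integrable_lborel_imp_absolutely_integrable)
qed

theorem mainTheorem11:
  fixes I :: "real set" and f :: "real \<Rightarrow> real"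
    and m \<alpha> a b q p \<theta> :: real
  assumes q: "q > 1" and p: "p = q / (q - 1)"
    and I: "is_interval I" "I \<subseteq> {0..}"
    and diff: "\<forall>x\<in>interior I. f differentiable (at x)"
    and m: "0 < m" "m \<le> 1"
    and \<alpha>: "0 \<le> \<alpha>" "\<alpha> \<le> 1"
    and ab: "a < b" "m * a \<in> interior I" "b \<in> interior I"
    and integ: "set_integrable lborel {m * a..m * b} (deriv f)"
    and conv: "alpha_m_convex \<alpha> m {m * a..b} (\<lambda>x. \<bar>deriv f x\<bar> powr q)"
    and \<theta>: "\<theta> > 0"
  shows "\<bar>(f (m * a) + 4 * f (m * (a + b) / 2) + f (m * b)) / 6
          - Gamma (\<theta> + 1) * 2 powr (\<theta> - 1) / (m powr \<theta> * (b - a) powr \<theta>)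
            * (RL_left \<theta> (m * (a + b) / 2) f (m * a) + RL_right \<theta> (m * (a + b) / 2) f (m * b))\<bar>
     \<le> m * (b - a) / 4 * A4 \<theta> (1 / 3) p powr (1 / p)
        * (((\<bar>deriv f (m * (a + b) / 2)\<bar> powr q + \<alpha> * m * \<bar>deriv f a\<bar> powr q) / (\<alpha> + 1)) powr (1 / q)
         + ((\<bar>deriv f (m * (a + b) / 2)\<bar> powr q + \<alpha> * m * \<bar>deriv f b\<bar> powr q) / (\<alpha> + 1)) powr (1 / q))"
proof -
  have pq: "p > 1" "1/p + 1/q = 1" using q unfolding p by (simp_all add: field_simps)
  have "0 \<le> m * a" using ab(2) I(2) interior_subset by fastforce
  hence "0 \<le> a" using m(1) by (simp add: zero_le_mult_iff)
  hence "m * a \<le> a" and mb: "m * b \<le> b"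
    using m ab by (simp_all add: mult_left_le_one_le)
  hence K: "a \<in> {m * a..b}" "b \<in> {m * a..b}" using ab by auto
  have "{m * a..m * b} \<subseteq> interior I"
    using ab I(1) mb by (auto simp: is_interval_convex_1 intro: mem_is_interval_1_I)
  hence deriv: "(f has_real_derivative deriv f x) (at x)" if "x \<in> {m * a..m * b}" for x
    using diff that by (auto simp: DERIV_deriv_iff_real_differentiable)
  have path: "t * (m * (a + b) / 2) + m * (1 - t) * y \<in> {m * a..b}" if "t \<in> {0..1}" "y \<in> {a, b}" for t y
    using midpoint_path_mem[OF m(1) ab(1) that(2,1)] mb by auto
  let ?J = "\<lambda>y. integral {0..1} (\<lambda>t. (t powr \<theta> - 1/3) * deriv f (t * (m * (a + b) / 2) + m * (1 - t) * y))"
  let ?N = "\<lambda>y. ((\<bar>deriv f (m * (a + b) / 2)\<bar> powr q + \<alpha> * m * \<bar>deriv f y\<bar> powr q) / (\<alpha> + 1)) powr (1/q)"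
  have bound: "\<bar>?J y\<bar> \<le> A4 \<theta> (1/3) p powr (1/p) * ?N y" if "y \<in> {a, b}" for y
    using path[of 1 y] path[of _ y] K that absolutely_integrable_midpoint_path[OF m(1) ab(1) that integ]
    by (intro abs_integral_powr_kernel_mult_le_alpha_m_convex[OF pq(1) q pq(2) \<theta> _ _ \<alpha>(1) conv]) auto
  have "\<bar>(f (m * a) + 4 * f (m * (a + b) / 2) + f (m * b)) / 6
          - Gamma (\<theta> + 1) * 2 powr (\<theta> - 1) / (m powr \<theta> * (b - a) powr \<theta>)
            * (RL_left \<theta> (m * (a + b) / 2) f (m * a) + RL_right \<theta> (m * (a + b) / 2) f (m * b))\<bar>
        = \<bar>m * (b - a) / 4 * (?J a - ?J b)\<bar>"
    using m ab \<theta> deriv integ by (subst Simpson_fractional_identity_midpoint_paths) auto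
  also have "\<dots> \<le> m * (b - a) / 4 * (\<bar>?J a\<bar> + \<bar>?J b\<bar>)"
    using m ab by (simp add: abs_mult abs_triangle_ineq4 mult_left_mono)
  also have "\<dots> \<le> m * (b - a) / 4 * (A4 \<theta> (1/3) p powr (1/p) * (?N a + ?N b))"
    using bound[of a] bound[of b] m ab by (intro mult_left_mono) (auto simp: distrib_left intro: add_mono)
  finally show ?thesis by (simp only: mult.assoc)
qed

end
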